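(* In every $n$-resource selection game $G$, the set $D_G$ is nonempty, $P_G\ne\emptyset$, and $h_G\in\mathbb{R}$ is well defined.
   Context: An $n$-resource selection game is $G=\bigl((f_j)_{j=1}^n;(\mu^{R})_{\emptyset\ne R\subseteq[n]}\bigr)$ with each $f_j:[0,\infty)\to\mathbb{R}$ nondecreasing and each $\mu^R\ge0$. For nondecreasing $g_1,\ldots,g_m:[0,\infty)\to\mathbb{R}\cup\{\mathrm{undefined}\}$, $\mathrm{eq}(g_1,\ldots,g_m)(\mu)$ equals $g_1(\mu_1)$ if there exist $\mu_1,\ldots,\mu_m\ge0$ with $\sum\mu_j=\mu$ and $g_1(\mu_1)=\cdots=g_m(\mu_m)\in\mathbb{R}$, and $\mathrm{undefined}$ otherwise (well defined). For nonempty $S\subseteq[n]$: $E_G(S)=\mathrm{eq}(f_k:k\in S)\bigl(\sum_{\emptyset\ne R\subseteq S}\mu^R\bigr)$; $M_G(S)$ is the set of nonempty $S'\subseteq S$ such that for every $0\le\mu\le\sum_{R\subseteq S,\,R\cap S'\ne\emptyset}\mu^R$, $\mathrm{eq}(f_k:k\in S')(\mu)\ne E_G(S)$ (where $\mathrm{undefined}$ counts as different from every real); $D_G=\{S:\ E_G(S)\in\mathbb{R}\text{ and }M_G(S)=\emptyset\}$; $h_G=\max_{S\in D_G}E_G(S)$; $P_G=\bigcup\{S\in D_G: E_G(S)=h_G\}$. *)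

theory Defs
  imports Complex_Main 
begin

text \<open>Resources are indexed by {1..n}; cost functions f j :: real => real (only values on [0,oo)
matter); demands mu R for sets R of resources. The value "undefined" of eq is modelled by None.\<close>

definition eq_rel :: "(nat \<Rightarrow> real \<Rightarrow> real) \<Rightarrow> nat set \<Rightarrow> real \<Rightarrow> real \<Rightarrow> bool" where
  "eq_rel f S m c \<longleftrightarrow> (\<exists>x. (\<forall>j\<in>S. x j \<ge> 0) \<and> (\<Sum>j\<in>S. x j) = m \<and> (\<forall>j\<in>S. f j (x j) = c))"

definition eqv :: "(nat \<Rightarrow> real \<Rightarrow> real) \<Rightarrow> nat set \<Rightarrow> real \<Rightarrow> real option" where
  "eqv f S m = (if \<exists>c. eq_rel f S m c then Some (THE c. eq_rel f S m c) else None)"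

definition E_G :: "(nat \<Rightarrow> real \<Rightarrow> real) \<Rightarrow> (nat set \<Rightarrow> real) \<Rightarrow> nat set \<Rightarrow> real option" where
  "E_G f \<mu> S = eqv f S (\<Sum>R\<in>{R. R \<noteq> {} \<and> R \<subseteq> S}. \<mu> R)"

definition M_G :: "(nat \<Rightarrow> real \<Rightarrow> real) \<Rightarrow> (nat set \<Rightarrow> real) \<Rightarrow> nat set \<Rightarrow> nat set set" where
  "M_G f \<mu> S = {S'. S' \<noteq> {} \<and> S' \<subseteq> S \<and>
     (\<forall>m. 0 \<le> m \<and> m \<le> (\<Sum>R\<in>{R. R \<subseteq> S \<and> R \<inter> S' \<noteq> {}}. \<mu> R)
          \<longrightarrow> eqv f S' m \<noteq> E_G f \<mu> S)}"

definition D_G :: "nat \<Rightarrow> (nat \<Rightarrow> real \<Rightarrow> real) \<Rightarrow> (nat set \<Rightarrow> real) \<Rightarrow> nat set set" where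
  "D_G n f \<mu> = {S. S \<noteq> {} \<and> S \<subseteq> {1..n} \<and> E_G f \<mu> S \<noteq> None \<and> M_G f \<mu> S = {}}"

definition h_G :: "nat \<Rightarrow> (nat \<Rightarrow> real \<Rightarrow> real) \<Rightarrow> (nat set \<Rightarrow> real) \<Rightarrow> real" where
  "h_G n f \<mu> = Max ((\<lambda>S. the (E_G f \<mu> S)) ` D_G n f \<mu>)"

definition P_G :: "nat \<Rightarrow> (nat \<Rightarrow> real \<Rightarrow> real) \<Rightarrow> (nat set \<Rightarrow> real) \<Rightarrow> nat set" where
  "P_G n f \<mu> = \<Union>{S \<in> D_G n f \<mu>. E_G f \<mu> S = Some (h_G n f \<mu>)}"

end

theory Submission
  imports Defs
begin

(* Every singleton {j} with j a resource is a member of D_G: with all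
   demand of {j} routed to j, the equilibrium value is E_G({j}) = f_j(mu {j}), and the
   only candidate S' in M_G({j}) is {j} itself, which is excluded because the demand
   mu {j} lies in the admissible range and reproduces E_G({j}).  Hence D_G is nonempty
   (n >= 1).  Since D_G is a family of subsets of {1..n}, it is finite, so the maximum
   h_G of the real values E_G(S), S in D_G, exists, is attained by some S in D_G and
   bounds all of them; that maximiser S is nonempty and contained in P_G. *)

lemma eqv_singleton:
  assumes "m \<ge> 0"
  shows "eqv f {j} m = Some (f j m)"
proof -
  have "eq_rel f {j} m c \<longleftrightarrow> c = f j m" for c
    unfolding eq_rel_def using assms by auto
  then show ?thesis unfolding eqv_def by auto
qed

lemma nonempty_subsets_singleton: "{R. R \<noteq> {} \<and> R \<subseteq> {j::nat}} = {{j}}"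
  by auto

lemma subsets_meeting_singleton: "{R. R \<subseteq> {j::nat} \<and> R \<inter> {j} \<noteq> {}} = {{j}}"
  by auto

lemma E_G_singleton:
  assumes "\<mu> {j} \<ge> 0"
  shows "E_G f \<mu> {j} = Some (f j (\<mu> {j}))"
  unfolding E_G_def nonempty_subsets_singleton using eqv_singleton[of "\<mu> {j}" f j, OF assms]
  by simp

text \<open>No subset of a singleton misses its equilibrium value: the full demand reproduces it.\<close>

lemma M_G_singleton:
  assumes "\<mu> {j} \<ge> 0"
  shows "M_G f \<mu> {j} = {}"
proof (rule ccontr)
  assume "M_G f \<mu> {j} \<noteq> {}"
  then obtain S' where S': "S' \<in> M_G f \<mu> {j}" by blast
  then have "S' = {j}" unfolding M_G_def by auto
  with S' have "\<forall>m. 0 \<le> m \<and> m \<le> (\<Sum>R\<in>{R. R \<subseteq> {j} \<and> R \<inter> {j} \<noteq> {}}. \<mu> R)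
      \<longrightarrow> eqv f {j} m \<noteq> E_G f \<mu> {j}"
    unfolding M_G_def by blast
  then have "eqv f {j} (\<mu> {j}) \<noteq> E_G f \<mu> {j}"
    unfolding subsets_meeting_singleton using assms by simp
  then show False
    using E_G_singleton[of \<mu> j f, OF assms] eqv_singleton[of "\<mu> {j}" f j, OF assms] by simp
qed

lemma singleton_in_D_G:
  assumes "j \<in> {1..n}" and "\<mu> {j} \<ge> 0"
  shows "{j} \<in> D_G n f \<mu>"
  using assms E_G_singleton[of \<mu> j f, OF assms(2)] M_G_singleton[of \<mu> j f, OF assms(2)]
  unfolding D_G_def by auto

lemma finite_D_G: "finite (D_G n f \<mu>)"
  by (rule finite_subset[of _ "Pow {1..n}"]) (auto simp: D_G_def)

lemma h_G_attained:
  assumes "D_G n f \<mu> \<noteq> {}"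
  obtains S where "S \<in> D_G n f \<mu>" "E_G f \<mu> S = Some (h_G n f \<mu>)"
proof -
  have "h_G n f \<mu> \<in> (\<lambda>S. the (E_G f \<mu> S)) ` D_G n f \<mu>"
    unfolding h_G_def using finite_D_G assms by (intro Max_in) auto
  then obtain S where S: "S \<in> D_G n f \<mu>" "the (E_G f \<mu> S) = h_G n f \<mu>"
    by (metis (no_types, lifting) imageE)
  then have "E_G f \<mu> S = Some (h_G n f \<mu>)" by (auto simp: D_G_def)
  with S(1) show thesis by (rule that)
qed

lemma h_G_upper_bound:
  assumes "S \<in> D_G n f \<mu>"
  shows "the (E_G f \<mu> S) \<le> h_G n f \<mu>"
  unfolding h_G_def using finite_D_G assms by (intro Max_ge) auto

lemma maximiser_subset_P_G:
  assumes "S \<in> D_G n f \<mu>" and "E_G f \<mu> S = Some (h_G n f \<mu>)"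
  shows "S \<subseteq> P_G n f \<mu>" and "S \<noteq> {}"
  using assms unfolding P_G_def D_G_def by blast+

theorem mainTheorem13:
  fixes n :: nat and f :: "nat \<Rightarrow> real \<Rightarrow> real" and \<mu> :: "nat set \<Rightarrow> real"
  assumes "n \<ge> 1"
    and "\<And>j. j \<in> {1..n} \<Longrightarrow> mono_on {0..} (f j)"
    and "\<And>R. R \<noteq> {} \<Longrightarrow> R \<subseteq> {1..n} \<Longrightarrow> \<mu> R \<ge> 0"
  shows "D_G n f \<mu> \<noteq> {}
    \<and> (\<exists>S\<in>D_G n f \<mu>. E_G f \<mu> S = Some (h_G n f \<mu>) \<and>
         (\<forall>S'\<in>D_G n f \<mu>. the (E_G f \<mu> S') \<le> h_G n f \<mu>))
    \<and> P_G n f \<mu> \<noteq> {}"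
proof -
  have one: "(1::nat) \<in> {1..n}" using assms(1) by simp
  then have "{1} \<in> D_G n f \<mu>"
    using singleton_in_D_G assms(3)[of "{1}"] by simp
  then have nonempty: "D_G n f \<mu> \<noteq> {}" by blast
  then obtain S where S: "S \<in> D_G n f \<mu>" "E_G f \<mu> S = Some (h_G n f \<mu>)"
    by (rule h_G_attained)
  have "P_G n f \<mu> \<noteq> {}" using maximiser_subset_P_G[OF S] by blast
  with nonempty S h_G_upper_bound show ?thesis by blast
qed

end
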